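(* Let $n\in\mathbf{N}$ and let $A\subset[n]$ have property P. If $\left|A\cap\left(\frac{2n}{3},n\right]\right|\geqslant\frac{2n}{9}+\frac43$, then $|A|\leqslant\left\lceil\frac n3\right\rceil$.
   Context: A set $A\subset\mathbf{N}$ has property P if there are no $x,y,z\in A$ (not necessarily distinct $x,y$) with $z<x$, $z<y$ and $z\mid x+y$. $(\alpha,\beta]$ denotes the set of integers $m$ with $\alpha<m\le\beta$. *)

theory Defs
  imports Complex_Main
begin

definition property_P :: "nat set \<Rightarrow> bool" where
  "property_P A \<longleftrightarrow> \<not> (\<exists>x\<in>A. \<exists>y\<in>A. \<exists>z\<in>A. z < x \<and> z < y \<and> z dvd (x + y))"

end

theory Submission imports Defs begin

text \<open>Write \<open>[a, n]\<close> for the top third \<open>(2n/3, n]\<close>, which has \<open>\<lceil>n/3\<rceil>\<close> elements,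
  \<open>B\<close> for the part of \<open>A\<close> in it and \<open>C\<close> for the rest. No \<open>z \<in> C\<close> divides a sum of
  two elements of \<open>B\<close>, so for each multiple \<open>m\<close> of \<open>z\<close>, pairing \<open>x\<close> with \<open>m - x\<close>
  shows that \<open>B\<close> fills at most half of the subinterval of \<open>[a, n]\<close> centred at \<open>m/2\<close>.
  Two such half-filled intervals cannot cover \<open>[a, n]\<close>, since \<open>B\<close> is too large for
  that. For the two multiples of \<open>z\<close> around \<open>a + n\<close> this forces \<open>z \<ge> 2a/3\<close>, so \<open>3z\<close>
  is a usable multiple too; taking it for the largest \<open>z \<le> (a+n)/3\<close> and the smallest
  \<open>z > (a+n)/3\<close> in \<open>C\<close> gives two disjoint intervals whose halves free of \<open>B\<close> have
  room for all of \<open>C\<close>.\<close>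

lemma card_Int_interval_le_half:
  fixes S :: "nat set" and lo hi m :: nat
  assumes "lo + hi = m"
    and "\<And>x y. x \<in> S \<Longrightarrow> y \<in> S \<Longrightarrow> x + y \<noteq> m"
  shows "2 * card (S \<inter> {lo..hi}) \<le> card {lo..hi}"
proof -
  let ?T = "S \<inter> {lo..hi}"
  have inj: "inj_on (\<lambda>x. m - x) ?T"
    using assms(1) by (auto simp: inj_on_def)
  have "(\<lambda>x. m - x) ` ?T \<subseteq> {lo..hi} - ?T"
    using assms by force
  then have "card ?T \<le> card ({lo..hi} - ?T)"
    using card_inj_on_le[OF inj] by blast
  also have "\<dots> = card {lo..hi} - card ?T"
    by (rule card_Diff_subset) auto
  finally show ?thesis
    using card_mono[of "{lo..hi}" ?T] by auto
qed

lemma card_add_card_le_card_Int: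
  fixes B X I :: "'a set"
  assumes "finite I" "B \<subseteq> I" "X \<subseteq> I"
  shows "card B + card X \<le> card I + card (B \<inter> X)"
proof -
  have "finite B" "finite X"
    using assms finite_subset by blast+
  then have "card B = card (B \<inter> X) + card (B - X)" "card (I - X) = card I - card X"
    using assms(3) by (simp_all add: card_Int_Diff card_Diff_subset)
  moreover have "card (B - X) \<le> card (I - X)" "card X \<le> card I"
    using assms by (auto intro: card_mono)
  ultimately show ?thesis
    by linarith
qed

lemma card_le_two_thirds_if_covered:
  fixes B X1 X2 I :: "'a set"
  assumes "finite I" "B \<subseteq> I" "X1 \<subseteq> I" "X2 \<subseteq> I" "I \<subseteq> X1 \<union> X2"
    and "2 * card (B \<inter> X1) \<le> card X1" "2 * card (B \<inter> X2) \<le> card X2"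
  shows "3 * card B \<le> 2 * card I"
proof -
  have "card B \<le> card (B \<inter> X1) + card (B \<inter> X2)"
    using assms(2,5) card_Un_le[of "B \<inter> X1" "B \<inter> X2"]
    by (metis Int_Un_distrib Int_absorb2 order.trans)
  then show ?thesis
    using card_add_card_le_card_Int[OF assms(1,2,3)] card_add_card_le_card_Int[OF assms(1,2,4)]
      assms(6,7) by linarith
qed

lemma card_add_card_le_if_disjoint:
  fixes B X1 X2 I :: "'a set"
  assumes "finite I" "B \<subseteq> I" "X1 \<subseteq> I" "X2 \<subseteq> I" "X1 \<inter> X2 = {}"
  shows "card B + card X1 + card X2 \<le> card I + card (B \<inter> X1) + card (B \<inter> X2)"
proof -
  have fin: "finite X1" "finite X2"
    using assms(1,3,4) finite_subset by blast+
  have "card B + card (X1 \<union> X2) \<le> card I + card (B \<inter> (X1 \<union> X2))"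
    using assms(1-4) by (intro card_add_card_le_card_Int) auto
  moreover have "B \<inter> (X1 \<union> X2) = (B \<inter> X1) \<union> (B \<inter> X2)"
    by auto
  ultimately show ?thesis
    using fin assms(5) by (simp add: card_Un_disjoint disjoint_iff)
qed

text \<open>The consecutive multiples \<open>m\<^sub>1 \<le> a + n < m\<^sub>2\<close> of \<open>z\<close> pair up the intervals
  \<open>[a, m\<^sub>1 - a]\<close> and \<open>[m\<^sub>2 - n, n]\<close>; either they cover \<open>[a, n]\<close>, or the gap between
  them has fewer than \<open>z\<close> elements.\<close>

lemma card_le_if_no_sum_divisible:
  fixes B :: "nat set" and a n z :: nat
  assumes "B \<subseteq> {a..n}" "0 < z" "z < a" "a \<le> n"
    and no_dvd: "\<And>x y. x \<in> B \<Longrightarrow> y \<in> B \<Longrightarrow> \<not> z dvd (x + y)"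
  shows "3 * card B \<le> 2 * (n + 1 - a) \<or> 2 * card B \<le> z"
proof -
  define m1 where "m1 = z * ((a + n) div z)"
  define m2 where "m2 = m1 + z"
  have "m1 + (a + n) mod z = a + n" "(a + n) mod z < z"
    using assms(2) by (simp_all add: m1_def)
  then have m1: "a \<le> m1" "m1 \<le> a + n" and m2: "a + n < m2"
    using assms(3,4) unfolding m2_def by linarith+
  have "z dvd m1" "z dvd m2"
    by (simp_all add: m1_def m2_def)
  then have no_sum: "x + y \<noteq> m1" "x + y \<noteq> m2" if "x \<in> B" "y \<in> B" for x y
    using no_dvd[OF that] by auto
  have half1: "2 * card (B \<inter> {a..m1 - a}) \<le> card {a..m1 - a}"
    by (rule card_Int_interval_le_half) (use m1 no_sum in auto)
  have half2: "2 * card (B \<inter> {m2 - n..n}) \<le> card {m2 - n..n}"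
    by (rule card_Int_interval_le_half) (use m2 no_sum in auto)
  have sub: "{a..m1 - a} \<subseteq> {a..n}" "{m2 - n..n} \<subseteq> {a..n}"
    using m1 m2 by auto
  show ?thesis
  proof (cases "z < n + 1 - a")
    case True
    then have "{a..n} \<subseteq> {a..m1 - a} \<union> {m2 - n..n}"
      using m1 m2 unfolding m2_def by auto
    then show ?thesis
      using card_le_two_thirds_if_covered[OF _ assms(1) sub _ half1 half2] by simp
  next
    case False
    then have "{a..m1 - a} \<inter> {m2 - n..n} = {}"
      using m1 m2 unfolding m2_def by auto
    from card_add_card_le_if_disjoint[OF _ assms(1) sub this]
    have "card B + card {a..m1 - a} + card {m2 - n..n}
        \<le> n + 1 - a + card (B \<inter> {a..m1 - a}) + card (B \<inter> {m2 - n..n})"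
      by simp
    moreover have "2 * (n + 1 - a) \<le> card {a..m1 - a} + card {m2 - n..n} + z"
      using False m1 m2 unfolding m2_def by simp
    ultimately show ?thesis
      using half1 half2 by linarith
  qed
qed

lemma divisor_ge_two_thirds:
  fixes B :: "nat set" and a n z :: nat
  assumes "B \<subseteq> {a..n}" "0 < z" "z < a" "2 * n < 3 * a" "3 * a \<le> 2 * n + 3"
    and "2 * n + 12 \<le> 9 * card B"
    and "\<And>x y. x \<in> B \<Longrightarrow> y \<in> B \<Longrightarrow> \<not> z dvd (x + y)"
  shows "2 * a \<le> 3 * z"
proof -
  have "B \<noteq> {}"
    using assms(6) by auto
  then have "a \<le> n"
    using assms(1) by auto
  then have "3 * card B \<le> 2 * (n + 1 - a) \<or> 2 * card B \<le> z"
    using card_le_if_no_sum_divisible assms by blast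
  then show ?thesis
    using assms(4-6) by linarith
qed

lemma add_le_if_three_le_two_le:
  fixes c p X :: nat
  assumes "3 * c \<le> X + 2" "2 * p \<le> X"
  shows "c + p \<le> X"
  using assms by presburger

lemma card_low_divisors_bound:
  fixes B Z :: "nat set" and a n :: nat
  assumes "B \<subseteq> {a..n}" "finite Z" "0 < a" "a \<le> n"
    and Z: "\<And>z. z \<in> Z \<Longrightarrow> 2 * a \<le> 3 * z \<and> 3 * z \<le> a + n"
    and no_sum: "\<And>z x y. z \<in> Z \<Longrightarrow> x \<in> B \<Longrightarrow> y \<in> B \<Longrightarrow> x + y \<noteq> 3 * z"
  obtains h where "h \<le> n" "card Z + card (B \<inter> {a..h}) \<le> card {a..h}"
    "2 * card (B \<inter> {a..h}) \<le> card {a..h}"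
proof (cases "Z = {}")
  case True
  then show ?thesis
    using that[of "a - 1"] assms(3,4) by simp
next
  case False
  define zl where "zl = Max Z"
  have zl: "zl \<in> Z" "\<And>z. z \<in> Z \<Longrightarrow> z \<le> zl"
    using False \<open>finite Z\<close> by (simp_all add: zl_def)
  have zl_bounds: "2 * a \<le> 3 * zl" "3 * zl \<le> a + n"
    using Z[OF zl(1)] by auto
  have half: "2 * card (B \<inter> {a..3 * zl - a}) \<le> card {a..3 * zl - a}"
    by (rule card_Int_interval_le_half) (use zl_bounds no_sum[OF zl(1)] in auto)
  define k where "k = (2 * a + 2) div 3"
  have k: "2 * a \<le> 3 * k"
    unfolding k_def by linarith
  have "Z \<subseteq> {k..zl}"
  proof
    fix z assume "z \<in> Z"
    then have "2 * a \<le> 3 * z" "z \<le> zl"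
      using Z zl(2) by auto
    then show "z \<in> {k..zl}"
      unfolding k_def by simp
  qed
  then have "card Z \<le> zl + 1 - k"
    using card_mono[of "{k..zl}" Z] by simp
  then have "3 * card Z \<le> card {a..3 * zl - a} + 2"
    using zl_bounds k by simp
  then have "card Z + card (B \<inter> {a..3 * zl - a}) \<le> card {a..3 * zl - a}"
    using half by (rule add_le_if_three_le_two_le)
  then show ?thesis
    using that[of "3 * zl - a"] half zl_bounds by simp
qed

lemma card_high_divisors_bound:
  fixes B Z :: "nat set" and a n :: nat
  assumes "B \<subseteq> {a..n}" "finite Z" "a \<le> n" "3 * a \<le> 2 * n + 3"
    and Z: "\<And>z. z \<in> Z \<Longrightarrow> a + n < 3 * z \<and> z < a"
    and no_sum: "\<And>z x y. z \<in> Z \<Longrightarrow> x \<in> B \<Longrightarrow> y \<in> B \<Longrightarrow> x + y \<noteq> 3 * z"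
  obtains h where "a \<le> h" "card Z + card (B \<inter> {h..n}) \<le> card {h..n}"
    "2 * card (B \<inter> {h..n}) \<le> card {h..n}"
proof (cases "Z = {}")
  case True
  then show ?thesis
    using that[of "n + 1"] assms(3) by simp
next
  case False
  define zh where "zh = Min Z"
  have zh: "zh \<in> Z" "\<And>z. z \<in> Z \<Longrightarrow> zh \<le> z"
    using False \<open>finite Z\<close> by (simp_all add: zh_def)
  have zh_bounds: "a + n < 3 * zh" "zh < a"
    using Z[OF zh(1)] by auto
  have half: "2 * card (B \<inter> {3 * zh - n..n}) \<le> card {3 * zh - n..n}"
    by (rule card_Int_interval_le_half) (use zh_bounds no_sum[OF zh(1)] in auto)
  have "Z \<subseteq> {zh..<a}"
    using Z zh(2) by fastforce
  then have "card Z \<le> a - zh"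
    using card_mono[of "{zh..<a}" Z] by simp
  then have "3 * card Z \<le> card {3 * zh - n..n} + 2"
    using zh_bounds assms(4) by simp
  then have "card Z + card (B \<inter> {3 * zh - n..n}) \<le> card {3 * zh - n..n}"
    using half by (rule add_le_if_three_le_two_le)
  then show ?thesis
    using that[of "3 * zh - n"] half zh_bounds by simp
qed

lemma card_add_le_if_half_free_intervals:
  fixes B :: "nat set" and a n h l c d :: nat
  assumes B: "B \<subseteq> {a..n}" and "h \<le> n" "a \<le> l" and large: "2 * card {a..n} < 3 * card B"
    and low: "2 * card (B \<inter> {a..h}) \<le> card {a..h}" "c + card (B \<inter> {a..h}) \<le> card {a..h}"
    and high: "2 * card (B \<inter> {l..n}) \<le> card {l..n}" "d + card (B \<inter> {l..n}) \<le> card {l..n}"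
  shows "card B + c + d \<le> card {a..n}"
proof -
  have sub: "{a..h} \<subseteq> {a..n}" "{l..n} \<subseteq> {a..n}"
    using assms(2,3) by auto
  have "\<not> {a..n} \<subseteq> {a..h} \<union> {l..n}"
    using card_le_two_thirds_if_covered[OF _ B sub _ low(1) high(1)] large by auto
  then have "{a..h} \<inter> {l..n} = {}"
    by auto
  from card_add_card_le_if_disjoint[OF _ B sub this]
  show ?thesis
    using low(2) high(2) by simp
qed

lemma property_PD:
  assumes "property_P A" "x \<in> A" "y \<in> A" "z \<in> A" "z < x" "z < y"
  shows "\<not> z dvd (x + y)"
  using assms unfolding property_P_def by blast

lemma property_P_card_le:
  fixes A :: "nat set" and a n :: nat
  assumes A: "A \<subseteq> {1..n}" and P: "property_P A"
    and a: "2 * n < 3 * a" "3 * a \<le> 2 * n + 3"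
    and large: "2 * n + 12 \<le> 9 * card (A \<inter> {a..n})"
  shows "card A \<le> n + 1 - a"
proof -
  define B where "B = A \<inter> {a..n}"
  define C where "C = A \<inter> {..<a}"
  have B: "B \<subseteq> {a..n}" and large: "2 * n + 12 \<le> 9 * card B"
    using large by (simp_all add: B_def)
  then have "B \<noteq> {}"
    by auto
  then have a_le_n: "a \<le> n"
    using B by auto
  have finite: "finite B" "finite C"
    using A finite_subset by (auto simp: B_def C_def)
  have "A = B \<union> C" "B \<inter> C = {}"
    using A by (auto simp: B_def C_def)
  then have card_A: "card A = card B + card C"
    using finite card_Un_disjoint by metis
  have no_dvd: "\<not> z dvd (x + y)" if "z \<in> C" "x \<in> B" "y \<in> B" for x y z
    using property_PD[OF P] that by (auto simp: B_def C_def)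
  have C: "z < a" "2 * a \<le> 3 * z" if "z \<in> C" for z
  proof -
    have "0 < z" "z < a"
      using that A by (auto simp: C_def)
    then show "z < a" "2 * a \<le> 3 * z"
      using divisor_ge_two_thirds[OF B _ _ a large no_dvd[OF that]] by blast+
  qed
  have no_sum: "x + y \<noteq> 3 * z" if "z \<in> C" "x \<in> B" "y \<in> B" for x y z
    using no_dvd[OF that] by auto
  define Clo where "Clo = {z \<in> C. 3 * z \<le> a + n}"
  define Chi where "Chi = {z \<in> C. a + n < 3 * z}"
  have "C = Clo \<union> Chi" "Clo \<inter> Chi = {}" and finite_C: "finite Clo" "finite Chi"
    using finite by (auto simp: Clo_def Chi_def)
  then have card_C: "card C = card Clo + card Chi"
    using card_Un_disjoint by metis
  obtain hl where hl: "hl \<le> n" "card Clo + card (B \<inter> {a..hl}) \<le> card {a..hl}"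
    "2 * card (B \<inter> {a..hl}) \<le> card {a..hl}"
  proof (rule card_low_divisors_bound[OF B finite_C(1) _ a_le_n])
    show "0 < a"
      using a by linarith
    show "2 * a \<le> 3 * z \<and> 3 * z \<le> a + n" if "z \<in> Clo" for z
      using that C by (simp add: Clo_def)
    show "x + y \<noteq> 3 * z" if "z \<in> Clo" "x \<in> B" "y \<in> B" for x y z
      using that no_sum by (simp add: Clo_def)
  qed
  obtain lh where lh: "a \<le> lh" "card Chi + card (B \<inter> {lh..n}) \<le> card {lh..n}"
    "2 * card (B \<inter> {lh..n}) \<le> card {lh..n}"
  proof (rule card_high_divisors_bound[OF B finite_C(2) a_le_n a(2)])
    show "a + n < 3 * z \<and> z < a" if "z \<in> Chi" for z
      using that C by (simp add: Chi_def)
    show "x + y \<noteq> 3 * z" if "z \<in> Chi" "x \<in> B" "y \<in> B" for x y z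
      using that no_sum by (simp add: Chi_def)
  qed
  have "2 * card {a..n} < 3 * card B"
    using a large by simp
  from card_add_le_if_half_free_intervals[OF B hl(1) lh(1) this hl(3,2) lh(3,2)]
  show ?thesis
    using card_A card_C by simp
qed

theorem mainTheorem9:
  fixes n :: nat and A :: "nat set"
  assumes "n \<ge> 1"
    and "A \<subseteq> {1..n}"
    and "property_P A"
    and "real (card {m \<in> A. 2 * real n / 3 < real m \<and> m \<le> n}) \<ge> 2 * real n / 9 + 4 / 3"
  shows "real (card A) \<le> of_int \<lceil>real n / 3\<rceil>"
proof -
  define a where "a = 2 * n div 3 + 1"
  have a: "2 * n < 3 * a" "3 * a \<le> 2 * n + 3"
    by (simp_all add: a_def)
  have top_third: "2 * real n / 3 < real m \<longleftrightarrow> a \<le> m" for m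
  proof -
    have "2 * real n / 3 < real m \<longleftrightarrow> 2 * n < 3 * m"
      by linarith
    then show ?thesis
      using a by linarith
  qed
  have top_part: "{m \<in> A. 2 * real n / 3 < real m \<and> m \<le> n} = A \<inter> {a..n}"
    unfolding top_third by auto
  have "2 * n + 12 \<le> 9 * card (A \<inter> {a..n})"
    using assms(4) unfolding top_part by linarith
  then have "card A \<le> n + 1 - a"
    using property_P_card_le[OF assms(2,3) a] by blast
  moreover have "\<lceil>real n / 3\<rceil> = int (n + 1 - a)"
    by (rule ceiling_unique) (simp_all add: a_def of_nat_diff)
  ultimately show ?thesis
    by simp
qed

end
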